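(* In the triangle $ABC$ with $a=\sqrt{2-\sqrt2}$ and $b=c=1$, the triangle center $X_{26}$ coincides with vertex $A$.
   Context: $X_n$ denotes the $n$-th triangle center listed in Kimberling's Encyclopedia of Triangle Centers (ETC), given by barycentric coordinates in terms of $a=BC$, $b=CA$, $c=AB$. *)

theory Defs
  imports Complex_Main
begin

(* Angle at the vertex opposite side x, in a triangle with sides x, y, z (law of cosines). *)
definition cos_opp :: "real \<Rightarrow> real \<Rightarrow> real \<Rightarrow> real" where
  "cos_opp x y z = (y^2 + z^2 - x^2) / (2 * y * z)"

definition cos2_opp :: "real \<Rightarrow> real \<Rightarrow> real \<Rightarrow> real" where
  "cos2_opp x y z = 2 * (cos_opp x y z)^2 - 1"

(* First barycentric coordinate of X(26) (ETC):
   a^2 (b^2 cos 2B + c^2 cos 2C - a^2 cos 2A) *)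
definition x26_f :: "real \<Rightarrow> real \<Rightarrow> real \<Rightarrow> real" where
  "x26_f a b c = a^2 * (b^2 * cos2_opp b c a + c^2 * cos2_opp c a b - a^2 * cos2_opp a b c)"

definition X26_bary :: "real \<Rightarrow> real \<Rightarrow> real \<Rightarrow> real \<times> real \<times> real" where
  "X26_bary a b c = (x26_f a b c, x26_f b c a, x26_f c a b)"

definition normalize_bary :: "real \<times> real \<times> real \<Rightarrow> real \<times> real \<times> real" where
  "normalize_bary p = (case p of (u, v, w) \<Rightarrow> (u / (u+v+w), v / (u+v+w), w / (u+v+w)))"

end

theory Submission
  imports Defs
begin

text \<open>For \<open>b = c\<close> the base angles agree, so the second and third barycentrics of \<open>X\<^sub>2\<^sub>6\<close>
  collapse to multiples of \<open>cos 2A\<close>. The side \<open>a = sqrt (2 - sqrt 2)\<close> makes \<open>A = \<pi>/4\<close>, hence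
  \<open>cos 2A = 0\<close>, while the first barycentric \<open>2 a\<^sup>2 b\<^sup>2 cos 2B\<close> stays nonzero.\<close>

lemma normalize_bary_vertex:
  assumes "u \<noteq> 0"
  shows "normalize_bary (u, 0, 0) = (1, 0, 0)"
  using assms by (simp add: normalize_bary_def)

lemma cos_opp_isosceles_base:
  "cos_opp c a c = a / (2 * c)" "cos_opp c c a = a / (2 * c)"
  by (cases "a = 0"; simp add: cos_opp_def power2_eq_square)+

lemma x26_f_isosceles:
  assumes "b = c"
  shows "x26_f b c a = b\<^sup>2 * a\<^sup>2 * cos2_opp a b c"
    and "x26_f c a b = c\<^sup>2 * a\<^sup>2 * cos2_opp a b c"
    and "x26_f a b c = a\<^sup>2 * (2 * b\<^sup>2 * cos2_opp b c a - a\<^sup>2 * cos2_opp a b c)"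
  unfolding assms x26_f_def cos2_opp_def cos_opp_isosceles_base
  by (simp_all add: algebra_simps)

lemma sqrt2_lt_2: "sqrt 2 < (2::real)"
  by (smt (verit) real_sqrt_less_iff real_sqrt_four)

lemma cos2_opp_apex_quarter_pi:
  assumes "a\<^sup>2 = 2 - sqrt 2"
  shows "cos2_opp a 1 1 = 0"
proof -
  have cos_A: "cos_opp a 1 1 = sqrt 2 / 2"
    using assms by (simp add: cos_opp_def)
  show ?thesis
    unfolding cos2_opp_def cos_A by (simp add: power_divide)
qed

lemma cos2_opp_base_angle:
  assumes "a\<^sup>2 = 2 - sqrt 2"
  shows "cos2_opp 1 1 a = - sqrt 2 / 2"
  using assms by (simp add: cos2_opp_def cos_opp_isosceles_base field_simps)

theorem theorem3p7:
  fixes a b c :: real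
  assumes "a = sqrt (2 - sqrt 2)" and "b = 1" and "c = 1"
  shows "normalize_bary (X26_bary a b c) = (1, 0, 0)"
proof -
  have a_sq: "a\<^sup>2 = 2 - sqrt 2"
    using assms(1) sqrt2_lt_2 by simp
  note cos2_A = cos2_opp_apex_quarter_pi[OF a_sq]
  have "x26_f a 1 1 = (sqrt 2 - 2) * sqrt 2"
    using x26_f_isosceles(3)[of 1 1 a] cos2_A cos2_opp_base_angle[OF a_sq] a_sq
    by (simp add: algebra_simps)
  moreover have "x26_f 1 1 a = 0" and "x26_f 1 a 1 = 0"
    using x26_f_isosceles(1,2)[of 1 1 a] cos2_A by simp_all
  moreover have "(sqrt 2 - 2) * sqrt 2 \<noteq> (0::real)"
    using sqrt2_lt_2 by simp
  ultimately show ?thesis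
    using assms(2,3) by (simp add: X26_bary_def normalize_bary_vertex)
qed

end
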